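(* Let $\ell\ge2$, $n\ge1$ and $N=\lfloor n/\ell\rfloor$. Let $\tilde e_j$ ($0\le j\le\ell-1$) be the Misra–Miwa Kashiwara operators on partitions and $\varepsilon_j(\mu)=\max\{k\ge0:\tilde e_j^{\,k}\mu\neq0\}$. (1) If $n\not\equiv0\pmod\ell$, then for $0\le i\le N$: $\tilde e_j(\mu_i^{(n)})=0$ if $j\not\equiv n-1\pmod\ell$, and $\tilde e_j(\mu_i^{(n)})=\mu_i^{(n-1)}$ if $j\equiv n-1\pmod\ell$. (2) If $n\equiv0\pmod\ell$, then for $1\le i\le N$: $\tilde e_j(\mu_i^{(n)})=0$ if $j\not\equiv n-1$, and $\tilde e_j(\mu_i^{(n)})=\mu_{i-1}^{(n-1)}$ if $j\equiv n-1\pmod\ell$; and $\tilde e_j(\mu_0^{(n)})=0$ for all $0\le j\le\ell-1$. (3) For $1\le i\le N$, $\varepsilon_j(\mu_i^{(n)})=1$ if $j\equiv n-1\pmod\ell$ and $0$ otherwise; and $\varepsilon_j(\mu_0^{(n)})=1$ if $j\equiv n-1\pmod\ell$ and $n\not\equiv0\pmod\ell$, and $0$ otherwise.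
   Context: Partitions $\mu_i^{(k)}$ for $k\ge1$, $N_k=\lfloor k/\ell\rfloor$: $\mu_0^{(k)}=(k)$; for $1\le i\le N_k$, with $a=(\ell-1)+(N_k-i)\ell$, $m=k-a=b(\ell-1)+c$, $0\le c<\ell-1$, $\mu_i^{(k)}=(a,(\ell-1)^b,c)$ (omit $c$ if $0$). The box in row $a$, column $b$ of a Young diagram has $\ell$-residue $b-a\bmod\ell$. A box is removable (resp. addable) for $\lambda$ if removing it from (resp. adding it to) $\lambda$ gives a partition; it is $i$-removable/$i$-addable if its residue is $i$. Reading the $i$-addable and $i$-removable boxes of $\lambda$ from the bottom row up gives a word in $A$ (addable) and $R$ (removable); delete occurrences of $AR$ repeatedly until none remain. If an $R$ remains, the $i$-good box is the removable box corresponding to the rightmost remaining $R$, and $\tilde e_i\lambda=\lambda$ minus that box; otherwise $\tilde e_i\lambda=0$. *)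

theory Defs
  imports Main
begin

text \<open>Boxes are pairs (row, column), both 1-indexed; rows are listed top to bottom
  (English convention), so the bottom row has the largest index.\<close>

definition is_partition :: "nat list \<Rightarrow> bool" where
  "is_partition la \<longleftrightarrow> sorted_wrt (\<ge>) la \<and> (\<forall>x\<in>set la. 0 < x)"

definition diagram :: "nat list \<Rightarrow> (nat \<times> nat) set" where
  "diagram la = {(r, c). 1 \<le> r \<and> r \<le> length la \<and> 1 \<le> c \<and> c \<le> la ! (r - 1)}"

definition removable :: "nat list \<Rightarrow> nat \<times> nat \<Rightarrow> bool" where
  "removable la b \<longleftrightarrow> b \<in> diagram la \<and>
     (\<exists>mu. is_partition mu \<and> diagram mu = diagram la - {b})"

definition addable :: "nat list \<Rightarrow> nat \<times> nat \<Rightarrow> bool" where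
  "addable la b \<longleftrightarrow> b \<notin> diagram la \<and>
     (\<exists>mu. is_partition mu \<and> diagram mu = insert b (diagram la))"

definition residue :: "nat \<Rightarrow> nat \<times> nat \<Rightarrow> int" where
  "residue l b = (int (snd b) - int (fst b)) mod int l"

datatype sgn = Add | Rem

definition row_word :: "nat \<Rightarrow> nat \<Rightarrow> nat list \<Rightarrow> nat \<Rightarrow> (sgn \<times> (nat \<times> nat)) list" where
  "row_word l i la r =
     map (\<lambda>c. (Add, (r, c))) (sorted_list_of_set {c. addable la (r, c) \<and> residue l (r, c) = int i})
   @ map (\<lambda>c. (Rem, (r, c))) (sorted_list_of_set {c. removable la (r, c) \<and> residue l (r, c) = int i})"

text \<open>i-addable / i-removable boxes read from the bottom row up
  (rows length+1, length, ..., 1; no box of row > length+1 is addable).\<close>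
definition sig_word :: "nat \<Rightarrow> nat \<Rightarrow> nat list \<Rightarrow> (sgn \<times> (nat \<times> nat)) list" where
  "sig_word l i la = concat (map (row_word l i la) (rev [1..<length la + 2]))"

fun del_first_AR :: "(sgn \<times> 'b) list \<Rightarrow> (sgn \<times> 'b) list option" where
  "del_first_AR (x # y # xs) =
     (if fst x = Add \<and> fst y = Rem then Some xs
      else map_option (Cons x) (del_first_AR (y # xs)))"
| "del_first_AR _ = None"

definition del_step :: "(sgn \<times> 'b) list \<Rightarrow> (sgn \<times> 'b) list" where
  "del_step w = (case del_first_AR w of None \<Rightarrow> w | Some w' \<Rightarrow> w')"

text \<open>Repeatedly delete occurrences of A R until none remain
  (length w iterations always suffice, since each deletion shortens the word).\<close>
definition reduce_word :: "(sgn \<times> 'b) list \<Rightarrow> (sgn \<times> 'b) list" where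
  "reduce_word w = (del_step ^^ length w) w"

definition good_box :: "nat \<Rightarrow> nat \<Rightarrow> nat list \<Rightarrow> (nat \<times> nat) option" where
  "good_box l i la =
     (let w = reduce_word (sig_word l i la) in
      if \<exists>x\<in>set w. fst x = Rem
      then Some (snd (last (filter (\<lambda>x. fst x = Rem) w)))
      else None)"

definition remove_box :: "nat list \<Rightarrow> nat \<times> nat \<Rightarrow> nat list" where
  "remove_box la b = filter (\<lambda>x. 0 < x) (la[fst b - 1 := la ! (fst b - 1) - 1])"

text \<open>Kashiwara operator e~_i; the value 0 is represented by None.\<close>
definition etilde :: "nat \<Rightarrow> nat \<Rightarrow> nat list \<Rightarrow> nat list option" where
  "etilde l i la = map_option (remove_box la) (good_box l i la)"

definition etilde_pow :: "nat \<Rightarrow> nat \<Rightarrow> nat \<Rightarrow> nat list \<Rightarrow> nat list option" where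
  "etilde_pow l i k la = ((\<lambda>x. Option.bind x (etilde l i)) ^^ k) (Some la)"

definition epsilon :: "nat \<Rightarrow> nat \<Rightarrow> nat list \<Rightarrow> nat" where
  "epsilon l i la = (GREATEST k. etilde_pow l i k la \<noteq> None)"

text \<open>mu l k i = mu_i^(k); mu_0^(0) is the empty partition.\<close>
definition mu :: "nat \<Rightarrow> nat \<Rightarrow> nat \<Rightarrow> nat list" where
  "mu l k i =
     (if i = 0 then (if k = 0 then [] else [k])
      else (let a = (l - 1) + (k div l - i) * l; m = k - a;
                b = m div (l - 1); c = m mod (l - 1)
            in a # replicate b (l - 1) @ (if c = 0 then [] else [c])))"

end

theory Submission
  imports Defs
begin

text \<open>Put L = l - 1. For i \<ge> 1 the partition mu_i^(n) is (a, L^b, c) with a \<equiv> -1 (mod l),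
  so its addable and removable boxes lie at the ends of rows 1, 2, b + 1, b + 2 and b + 3,
  and their residues are explicit. In every signature each R is cancelled by the A read just
  before it, except for one R in the signature of residue (n - 1) mod l: the last box of
  row b + 2, or of row b + 1 when c = 0. Removing it gives a partition of the same shape
  and size n - 1, namely mu_i^(n-1), or mu_(i-1)^(n-1) when l divides n. The one-row
  partition (n) has the word A R for residue (n - 1) mod l when l divides n, and the word R
  otherwise. As (n - 2) mod l differs from (n - 1) mod l, no e~_j applies twice, so
  epsilon_j is 1 exactly when e~_j is defined.\<close>

definition rowlen :: "nat list \<Rightarrow> nat \<Rightarrow> nat" where
  "rowlen la r = (if 1 \<le> r \<and> r \<le> length la then la ! (r - 1) else 0)"

lemma rowlen_0 [simp]: "rowlen la 0 = 0"
  by (simp add: rowlen_def)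

lemma rowlen_Suc: "rowlen la (Suc i) = (if i < length la then la ! i else 0)"
  by (simp add: rowlen_def)

lemma diagram_eq_rowlen: "diagram la = {(r, c). 1 \<le> r \<and> 1 \<le> c \<and> c \<le> rowlen la r}"
  unfolding diagram_def rowlen_def by (auto split: if_splits)

lemma is_partition_iff_rowlen:
  "is_partition la \<longleftrightarrow>
     (\<forall>r\<ge>1. rowlen la (Suc r) \<le> rowlen la r) \<and> (\<forall>r. 1 \<le> r \<and> r \<le> length la \<longrightarrow> 0 < rowlen la r)"
proof -
  have "(\<forall>r\<ge>1. P r) \<longleftrightarrow> (\<forall>i. P (Suc i))" for P :: "nat \<Rightarrow> bool"
    by (metis One_nat_def Suc_le_D Suc_le_mono le0)
  moreover have "sorted_wrt (\<ge>) la \<longleftrightarrow> (\<forall>i. Suc i < length la \<longrightarrow> la ! Suc i \<le> la ! i)"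
    by (subst sorted_wrt_iff_nth_Suc_transp) (auto simp: transp_def)
  moreover have "(\<forall>x\<in>set la. 0 < x) \<longleftrightarrow> (\<forall>i<length la. 0 < la ! i)"
    by (auto simp: in_set_conv_nth)
  ultimately show ?thesis
    unfolding is_partition_def by (auto simp: rowlen_Suc Suc_le_eq dest!: gr0_implies_Suc)
qed

lemma rowlen_eq_0: "length la < r \<Longrightarrow> rowlen la r = 0"
  by (simp add: rowlen_def)

lemma ex_partition_rowlen:
  assumes "f 0 = 0" and antimono: "\<forall>r\<ge>1. f (Suc r) \<le> f r" and vanish: "\<forall>r>K. f r = 0"
  shows "\<exists>mu. is_partition mu \<and> rowlen mu = f"
proof -
  define m where "m = (LEAST i. f (Suc i) = 0)"
  define mu where "mu = map (\<lambda>i. f (Suc i)) [0..<m]"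
  have "f (Suc K) = 0" using vanish by simp
  then have fm: "f (Suc m) = 0"
    unfolding m_def by (rule LeastI)
  have "f (Suc i) = 0" if "m \<le> i" for i
    using lift_Suc_antimono_le[of "\<lambda>i. f (Suc i)", OF _ that] antimono fm by simp
  moreover have "0 < f (Suc i)" if "i < m" for i
    using not_less_Least[of i "\<lambda>i. f (Suc i) = 0"] that unfolding m_def by simp
  ultimately have "rowlen mu r = f r" for r
    by (cases r) (auto simp: mu_def rowlen_Suc assms(1) not_less)
  then have rowlen_mu: "rowlen mu = f" ..
  have "is_partition mu"
    unfolding is_partition_iff_rowlen rowlen_mu
    using antimono \<open>\<And>i. i < m \<Longrightarrow> 0 < f (Suc i)\<close>
    by (auto simp: mu_def Suc_le_eq dest!: gr0_implies_Suc)
  with rowlen_mu show ?thesis by blast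
qed

lemma removable_iff:
  assumes la: "is_partition la"
  shows "removable la (r, c) \<longleftrightarrow> 1 \<le> r \<and> 1 \<le> c \<and> c = rowlen la r \<and> rowlen la (Suc r) < c"
proof
  assume "removable la (r, c)"
  then obtain mu where "(r, c) \<in> diagram la" and mu: "is_partition mu" "diagram mu = diagram la - {(r, c)}"
    unfolding removable_def by blast
  then have box: "1 \<le> r" "1 \<le> c" "c \<le> rowlen la r" and not_in_mu: "\<not> c \<le> rowlen mu r"
    by (auto simp: diagram_eq_rowlen)
  have "c = rowlen la r"
  proof (rule ccontr)
    assume "c \<noteq> rowlen la r"
    then have "(r, Suc c) \<in> diagram mu" using mu(2) box by (auto simp: diagram_eq_rowlen)
    with not_in_mu show False by (auto simp: diagram_eq_rowlen)
  qed
  moreover have "rowlen la (Suc r) < c"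
  proof (rule ccontr)
    assume "\<not> rowlen la (Suc r) < c"
    then have "(Suc r, c) \<in> diagram mu" using mu(2) box by (auto simp: diagram_eq_rowlen)
    then have "c \<le> rowlen mu (Suc r)" by (auto simp: diagram_eq_rowlen)
    with not_in_mu box(1) mu(1) show False by (auto simp: is_partition_iff_rowlen)
  qed
  ultimately show "1 \<le> r \<and> 1 \<le> c \<and> c = rowlen la r \<and> rowlen la (Suc r) < c"
    using box by simp
next
  assume box: "1 \<le> r \<and> 1 \<le> c \<and> c = rowlen la r \<and> rowlen la (Suc r) < c"
  have "\<exists>mu. is_partition mu \<and> rowlen mu = (rowlen la)(r := c - 1)"
  proof (rule ex_partition_rowlen[where K = "length la"])
    show "\<forall>r'\<ge>1. ((rowlen la)(r := c - 1)) (Suc r') \<le> ((rowlen la)(r := c - 1)) r'"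
      using la box by (auto simp: is_partition_iff_rowlen intro: order_trans)
  qed (use box in \<open>auto simp: rowlen_eq_0\<close>)
  then obtain mu where "is_partition mu" "rowlen mu = (rowlen la)(r := c - 1)"
    by blast
  moreover from this(2) box have "diagram mu = diagram la - {(r, c)}"
    by (auto simp: diagram_eq_rowlen split: if_splits)
  moreover have "(r, c) \<in> diagram la"
    using box by (simp add: diagram_eq_rowlen)
  ultimately show "removable la (r, c)"
    unfolding removable_def by blast
qed

lemma addable_iff:
  assumes la: "is_partition la"
  shows "addable la (r, c) \<longleftrightarrow> 1 \<le> r \<and> c = rowlen la r + 1 \<and> (r = 1 \<or> c \<le> rowlen la (r - 1))"
proof
  assume "addable la (r, c)"
  then obtain mu where not_in_la: "(r, c) \<notin> diagram la"
    and mu: "is_partition mu" "diagram mu = insert (r, c) (diagram la)"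
    unfolding addable_def by blast
  then have box: "1 \<le> r" "1 \<le> c" "c \<le> rowlen mu r" and "rowlen la r < c"
    by (auto simp: diagram_eq_rowlen)
  have "c = rowlen la r + 1"
  proof (rule ccontr)
    assume "c \<noteq> rowlen la r + 1"
    then have "(r, c - 1) \<in> diagram mu - diagram la"
      using box \<open>rowlen la r < c\<close> by (auto simp: diagram_eq_rowlen)
    with mu(2) box show False by auto
  qed
  moreover have "c \<le> rowlen la (r - 1)" if "r \<noteq> 1"
  proof -
    have "rowlen mu r \<le> rowlen mu (r - 1)"
      using mu(1) box(1) that is_partition_iff_rowlen[of mu] Suc_pred[of r]
      by (metis One_nat_def less_one not_le not_less_eq_eq)
    then have "(r - 1, c) \<in> diagram mu"
      using box that by (auto simp: diagram_eq_rowlen)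
    with mu(2) box(1) that show ?thesis by (auto simp: diagram_eq_rowlen)
  qed
  ultimately show "1 \<le> r \<and> c = rowlen la r + 1 \<and> (r = 1 \<or> c \<le> rowlen la (r - 1))"
    using box by blast
next
  assume box: "1 \<le> r \<and> c = rowlen la r + 1 \<and> (r = 1 \<or> c \<le> rowlen la (r - 1))"
  have "\<exists>mu. is_partition mu \<and> rowlen mu = (rowlen la)(r := c)"
  proof (rule ex_partition_rowlen[where K = "Suc (length la)"])
    show "\<forall>r'\<ge>1. ((rowlen la)(r := c)) (Suc r') \<le> ((rowlen la)(r := c)) r'"
      using la box by (auto simp: is_partition_iff_rowlen intro: order_trans)
  qed (use box in \<open>auto simp: rowlen_eq_0\<close>)
  then obtain mu where "is_partition mu" "rowlen mu = (rowlen la)(r := c)"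
    by blast
  moreover from this(2) box have "diagram mu = insert (r, c) (diagram la)"
    by (auto simp: diagram_eq_rowlen split: if_splits)
  moreover have "(r, c) \<notin> diagram la"
    using box by (simp add: diagram_eq_rowlen)
  ultimately show "addable la (r, c)"
    unfolding addable_def by blast
qed

definition row_signature :: "nat list \<Rightarrow> nat \<Rightarrow> (sgn \<times> (nat \<times> nat)) list" where
  "row_signature la r =
     (if 1 \<le> r \<and> (r = 1 \<or> rowlen la r < rowlen la (r - 1)) then [(Add, (r, rowlen la r + 1))] else [])
   @ (if 1 \<le> r \<and> rowlen la (Suc r) < rowlen la r then [(Rem, (r, rowlen la r))] else [])"

lemma row_word_eq_filter_row_signature:
  assumes "is_partition la"
  shows "row_word l i la r = filter (\<lambda>x. residue l (snd x) = int i) (row_signature la r)"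
proof -
  have "{c. addable la (r, c) \<and> residue l (r, c) = int i} =
      (if 1 \<le> r \<and> (r = 1 \<or> rowlen la r < rowlen la (r - 1)) \<and> residue l (r, rowlen la r + 1) = int i
       then {rowlen la r + 1} else {})"
    by (auto simp: addable_iff[OF assms])
  moreover have "{c. removable la (r, c) \<and> residue l (r, c) = int i} =
      (if 1 \<le> r \<and> rowlen la (Suc r) < rowlen la r \<and> residue l (r, rowlen la r) = int i
       then {rowlen la r} else {})"
    by (auto simp: removable_iff[OF assms])
  ultimately show ?thesis
    unfolding row_word_def row_signature_def by simp
qed

lemma sig_word_eq_filter_row_signatures:
  assumes "is_partition la"
  shows "sig_word l i la =
    filter (\<lambda>x. residue l (snd x) = int i) (concat (map (row_signature la) (rev [1..<length la + 2])))"
  unfolding sig_word_def filter_concat map_map comp_def row_word_eq_filter_row_signature[OF assms] ..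

lemma set_del_step_subset: "set (del_step w) \<subseteq> set w"
proof -
  have "set w' \<subseteq> set w" if "del_first_AR w = Some w'" for w'
    using that by (induction w arbitrary: w' rule: del_first_AR.induct) (auto split: if_splits)
  then show ?thesis
    unfolding del_step_def by (auto split: option.split)
qed

lemma set_reduce_word_subset: "set (reduce_word w) \<subseteq> set w"
proof -
  have "set ((del_step ^^ k) w) \<subseteq> set w" for k
    by (induction k) (use set_del_step_subset in auto)
  then show ?thesis
    unfolding reduce_word_def .
qed

lemma good_box_eq_None_if_no_Rem:
  assumes "\<forall>x\<in>set (sig_word l i la). fst x \<noteq> Rem"
  shows "good_box l i la = None"
  using assms set_reduce_word_subset unfolding good_box_def Let_def by fastforce

definition block_partition :: "nat \<Rightarrow> nat \<Rightarrow> nat \<Rightarrow> nat \<Rightarrow> nat list" where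
  "block_partition L a b c = a # replicate b L @ (if c = 0 then [] else [c])"

lemma length_block_partition: "length (block_partition L a b c) = b + (if c = 0 then 1 else 2)"
  by (simp add: block_partition_def)

lemma rowlen_block_partition:
  "rowlen (block_partition L a b c) r =
     (if r = 0 then 0 else if r = 1 then a else if r \<le> b + 1 then L else if r = b + 2 then c else 0)"
  unfolding rowlen_def length_block_partition by (auto simp: block_partition_def nth_Cons' nth_append)

locale block_shape =
  fixes L a b c :: nat
  assumes L_pos: "1 \<le> L" and L_le_a: "L \<le> a" and c_less_L: "c < L"
begin

abbreviation p where "p \<equiv> block_partition L a b c"

lemma is_partition_p: "is_partition p"
  unfolding is_partition_iff_rowlen length_block_partition rowlen_block_partition
  using L_pos L_le_a c_less_L by auto

lemma row_signatures_p:
  "concat (map (row_signature p) (rev [1..<length p + 2])) =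
     (if 0 < c then [(Add, (b + 3, 1))] else [])
   @ [(Add, (b + 2, c + 1))] @ (if 0 < c then [(Rem, (b + 2, c))] else [])
   @ concat (map (row_signature p) (rev [2..<b + 2]))
   @ [(Add, (1, a + 1))] @ (if b = 0 \<or> L < a then [(Rem, (1, a))] else [])"
proof -
  have "rev [1..<b + 2] = rev [2..<b + 2] @ [1]"
    by (simp add: upt_conv_Cons numeral_2_eq_2 del: upt_Suc)
  moreover have "rev [1..<length p + 2] = (if 0 < c then [b + 3] else []) @ [b + 2] @ rev [1..<b + 2]"
    by (simp add: length_block_partition eval_nat_numeral)
  ultimately have "rev [1..<length p + 2] = (if 0 < c then [b + 3] else []) @ [b + 2] @ rev [2..<b + 2] @ [1]"
    by simp
  moreover have "row_signature p (b + 3) = (if 0 < c then [(Add, (b + 3, 1))] else [])"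
    by (simp add: row_signature_def rowlen_block_partition)
  moreover have "row_signature p (b + 2) = (Add, (b + 2, c + 1)) # (if 0 < c then [(Rem, (b + 2, c))] else [])"
    using L_le_a c_less_L by (simp add: row_signature_def rowlen_block_partition)
  moreover have "row_signature p 1 = (Add, (1, a + 1)) # (if b = 0 \<or> L < a then [(Rem, (1, a))] else [])"
    using L_le_a c_less_L by (simp add: row_signature_def rowlen_block_partition)
  ultimately show ?thesis
    by (simp del: upt_Suc)
qed

lemma middle_row_signatures_p:
  "concat (map (row_signature p) (rev [2..<b + 2])) =
     (if b = 0 then []
      else if b = 1 then (if L < a then [(Add, (2, L + 1))] else []) @ [(Rem, (b + 1, L))]
      else [(Rem, (b + 1, L))] @ (if L < a then [(Add, (2, L + 1))] else []))"
proof -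
  consider "b = 0" | "b = 1" | "2 \<le> b" by linarith
  then show ?thesis
  proof cases
    case 2
    then show ?thesis
      using L_pos L_le_a c_less_L by (simp add: row_signature_def rowlen_block_partition)
  next
    case 3
    then obtain k where "b = Suc (Suc k)"
      using add_2_eq_Suc le_Suc_ex by metis
    then have "rev [2..<b + 2] = [b + 1] @ rev [3..<b + 1] @ [2]"
      by (simp add: upt_conv_Cons numeral_eq_Suc)
    moreover have "row_signature p r = []" if "r \<in> set [3..<b + 1]" for r
      using that by (auto simp: row_signature_def rowlen_block_partition)
    ultimately show ?thesis
      using 3 L_pos L_le_a c_less_L by (simp add: row_signature_def rowlen_block_partition)
  qed simp
qed

lemma remove_box_tail:
  assumes "0 < c"
  shows "remove_box p (b + 2, c) = block_partition L a b (c - 1)"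
  using assms L_pos L_le_a
  by (simp add: remove_box_def block_partition_def list_update_append nth_append filter_replicate)

lemma remove_box_rectangle:
  assumes "c = 0" and "1 \<le> b"
  shows "remove_box p (b + 1, L) = block_partition L a (b - 1) (L - 1)"
proof -
  define xs where "xs = a # replicate (b - 1) L"
  have "length xs = b" and "p = xs @ [L]"
    using assms by (simp_all add: xs_def block_partition_def replicate_append_same flip: replicate_Suc)
  then have "remove_box p (b + 1, L) = filter (\<lambda>x. 0 < x) (xs @ [L - 1])"
    by (simp add: remove_box_def list_update_append nth_append)
  then show ?thesis
    using L_pos L_le_a by (simp add: block_partition_def xs_def filter_replicate)
qed

end

lemma filter_singleton: "filter P [x] = (if P x then [x] else [])"
  by simp

lemma filter_if_singleton: "filter P (if C then [x] else []) = (if C \<and> P x then [x] else [])"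
  by (cases C) auto

lemma residue_eq_iff_dvd:
  "residue l (r, c) = residue l (r', c') \<longleftrightarrow> int l dvd (int c - int r) - (int c' - int r')"
  unfolding residue_def by (simp add: mod_eq_dvd_iff)

lemma residue_eq_mod:
  assumes "x = int c - int r + m * int l"
  shows "residue l (r, c) = x mod int l"
  unfolding residue_def assms by simp

lemma residue_eq_of_nat:
  assumes "int k = int c - int r + m * int l" "k < l"
  shows "residue l (r, c) = int k"
  using residue_eq_mod[OF assms(1)] assms(2) by (simp flip: of_nat_mod)

locale mu_shape = block_shape +
  fixes l n :: nat
  assumes L_eq: "L = l - 1" and a_mod_l: "a mod l = L" and n_eq: "n = a + b * L + c"
    and tail_nonempty: "1 \<le> b \<or> 0 < c"
begin

definition foot_res where "foot_res = nat (residue l (b + 3, 1))"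
definition tail_res where "tail_res = nat (residue l (b + 2, c + 1))"
definition good_res where "good_res = (n - 1) mod l"

lemma two_le_l: "2 \<le> l"
  using L_pos L_eq by simp

lemma int_a: "int a + 1 = (int (a div l) + 1) * int l"
proof -
  have "a + 1 = l * (a div l) + (a mod l + 1)"
    by simp
  also have "a mod l + 1 = l"
    using a_mod_l L_eq two_le_l by simp
  finally show ?thesis
    by (simp add: algebra_simps flip: of_nat_mult of_nat_add of_nat_Suc)
qed

lemma residues_of_boxes:
  "residue l (b + 3, 1) = int foot_res"
  "residue l (b + 1, L) = int foot_res"
  "residue l (b + 2, c + 1) = int tail_res"
  "residue l (b + 2, c) = int good_res"
  "residue l (2, L + 1) = int (l - 2)"
  "residue l (1, a + 1) = int (l - 1)"
  "residue l (1, a) = int (l - 2)"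
proof -
  show foot: "residue l (b + 3, 1) = int foot_res"
    unfolding foot_res_def residue_def using two_le_l by simp
  show "residue l (b + 1, L) = int foot_res"
    unfolding foot[symmetric] residue_eq_iff_dvd using L_eq two_le_l by (simp add: of_nat_diff)
  show "residue l (b + 2, c + 1) = int tail_res"
    unfolding tail_res_def residue_def using two_le_l by simp
  have "1 \<le> n"
    using n_eq L_pos L_le_a by simp
  then have "int good_res = (int n - 1) mod int l"
    unfolding good_res_def by (simp add: of_nat_mod of_nat_diff)
  moreover have "int n = int a + int b * (int l - 1) + int c"
    using n_eq L_eq two_le_l by (simp add: of_nat_diff)
  then have "int n - 1 = int c - int (b + 2) + (int (a div l) + 1 + int b) * int l"
    using int_a by (simp add: algebra_simps)
  ultimately show "residue l (b + 2, c) = int good_res"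
    using residue_eq_mod by presburger
  show "residue l (2, L + 1) = int (l - 2)"
    using L_eq two_le_l by (intro residue_eq_of_nat[where m = 0]) auto
  show "residue l (1, a + 1) = int (l - 1)"
    using int_a two_le_l
    by (intro residue_eq_of_nat[where m = "- int (a div l)"]) (auto simp: of_nat_diff algebra_simps)
  show "residue l (1, a) = int (l - 2)"
    using int_a two_le_l
    by (intro residue_eq_of_nat[where m = "- int (a div l)"]) (auto simp: of_nat_diff algebra_simps)
qed

lemma residue_classes:
  "tail_res \<noteq> foot_res"
  "tail_res \<noteq> good_res"
  "0 < c \<Longrightarrow> foot_res \<noteq> good_res"
  "c = 0 \<Longrightarrow> foot_res = good_res"
  "b = 0 \<Longrightarrow> foot_res = l - 2"
  "b = 1 \<Longrightarrow> foot_res \<noteq> l - 2"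
proof -
  have not_dvd: "\<not> int l dvd int d" if "0 < d" "d < l" for d
    using that zdvd_not_zless[of "int d" "int l"] by simp
  have "c + 1 < l"
    using c_less_L L_eq by simp
  then show "tail_res \<noteq> foot_res"
    using not_dvd[of "c + 1"] residues_of_boxes(1,3) residue_eq_iff_dvd[of l "b + 2" "c + 1" "b + 3" 1]
    by (auto simp: algebra_simps)
  show "tail_res \<noteq> good_res"
    using not_dvd[of 1] two_le_l residues_of_boxes(3,4) residue_eq_iff_dvd[of l "b + 2" "c + 1" "b + 2" c]
    by auto
  show "foot_res \<noteq> good_res" if "0 < c"
    using that not_dvd[of c] c_less_L L_eq residues_of_boxes(1,4) residue_eq_iff_dvd[of l "b + 2" c "b + 3" 1]
    by (auto simp: algebra_simps)
  show "foot_res = good_res" if "c = 0"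
    using that residues_of_boxes(1,4) residue_eq_iff_dvd[of l "b + 2" c "b + 3" 1]
    by auto
  show "foot_res = l - 2" if "b = 0"
  proof -
    have "residue l (b + 3, 1) = int (l - 2)"
      using that two_le_l by (intro residue_eq_of_nat[where m = 1]) (auto simp: of_nat_diff)
    then show ?thesis
      using residues_of_boxes(1) by simp
  qed
  show "foot_res \<noteq> l - 2" if "b = 1"
  proof
    assume "foot_res = l - 2"
    then have "int l dvd - 2 - int L"
      using that residues_of_boxes(1,5) residue_eq_iff_dvd[of l "b + 3" 1 2 "L + 1"] by simp
    moreover have "- 2 - int L = - 1 - int l"
      using L_eq two_le_l by simp
    ultimately have "int l dvd (- 1 - int l) + int l"
      by (intro dvd_add) auto
    then have "int l dvd 1"
      by simp
    then show False
      using two_le_l by simp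
  qed
qed

lemma sig_word_p:
  "sig_word l j p =
     (if 0 < c \<and> foot_res = j then [(Add, (b + 3, 1))] else [])
   @ (if tail_res = j then [(Add, (b + 2, c + 1))] else [])
   @ (if 0 < c \<and> good_res = j then [(Rem, (b + 2, c))] else [])
   @ (if b = 0 then []
      else if b = 1 then (if L < a \<and> l - 2 = j then [(Add, (2, L + 1))] else [])
                        @ (if foot_res = j then [(Rem, (b + 1, L))] else [])
      else (if foot_res = j then [(Rem, (b + 1, L))] else [])
         @ (if L < a \<and> l - 2 = j then [(Add, (2, L + 1))] else []))
   @ (if l - 1 = j then [(Add, (1, a + 1))] else [])
   @ (if (b = 0 \<or> L < a) \<and> l - 2 = j then [(Rem, (1, a))] else [])"
  unfolding sig_word_eq_filter_row_signatures[OF is_partition_p] row_signatures_p middle_row_signatures_p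
  by (simp only: filter_append filter.simps(1) filter_singleton filter_if_singleton snd_conv
      if_distrib[of "filter _" "b = 0"] if_distrib[of "filter _" "b = 1"]
      residues_of_boxes of_nat_eq_iff append_assoc)

lemma good_box_p:
  "good_box l j p = (if j = good_res then Some (if 0 < c then (b + 2, c) else (b + 1, L)) else None)"
proof (cases "j = good_res \<or> j = foot_res \<or> j = l - 2")
  case False
  then have "good_box l j p = None"
    by (intro good_box_eq_None_if_no_Rem) (auto simp: sig_word_p)
  with False show ?thesis
    by simp
next
  case True
  have "l - 2 \<noteq> l - 1"
    using two_le_l by simp
  consider "0 < c" "b = 0" | "0 < c" "b = 1" | "0 < c" "2 \<le> b" | "c = 0" "b = 1" | "c = 0" "2 \<le> b"
    using tail_nonempty by linarith
  then show ?thesis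
    using True \<open>l - 2 \<noteq> l - 1\<close> residue_classes
    unfolding good_box_def sig_word_p
    by cases (elim disjE; simp add: reduce_word_def del_step_def)+
qed

lemma etilde_p:
  "etilde l j p =
     (if j = good_res
      then Some (if 0 < c then block_partition L a b (c - 1) else block_partition L a (b - 1) (L - 1))
      else None)"
  using remove_box_tail remove_box_rectangle tail_nonempty
  by (auto simp: etilde_def good_box_p)

end

lemma pred_div_mod:
  fixes n l :: nat
  assumes "1 \<le> n" and "1 \<le> l"
  shows "(n - 1) div l = (if n mod l = 0 then n div l - 1 else n div l)"
    and "(n - 1) mod l = (if n mod l = 0 then l - 1 else n mod l - 1)"
proof -
  obtain m where "n = Suc m"
    using assms(1) by (cases n) auto
  then show "(n - 1) div l = (if n mod l = 0 then n div l - 1 else n div l)"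
    and "(n - 1) mod l = (if n mod l = 0 then l - 1 else n mod l - 1)"
    using assms(2) by (auto simp: mod_Suc div_Suc)
qed

lemma mu_eq_block_partition:
  assumes "1 \<le> i" and a: "a = l - 1 + (k div l - i) * l"
    and k: "k = a + B * (l - 1) + G" and "G < l - 1"
  shows "mu l k i = block_partition (l - 1) a B G"
proof -
  have "(k - a) div (l - 1) = B" and "(k - a) mod (l - 1) = G"
    using k \<open>G < l - 1\<close> by simp_all
  then show ?thesis
    using \<open>1 \<le> i\<close> unfolding mu_def Let_def a[symmetric] block_partition_def by simp
qed

lemma block_partition_eq_mu_pred:
  assumes l: "2 \<le> l" and i: "1 \<le> i" "i \<le> n div l" and a: "a = l - 1 + (n div l - i) * l"
    and n: "n - 1 = a + B * (l - 1) + G" and "G < l - 1"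
  shows "block_partition (l - 1) a B G = mu l (n - 1) (if n mod l = 0 then i - 1 else i)"
proof (cases "n mod l = 0 \<and> i = 1")
  case True
  then obtain q where q: "n = l * q"
    by blast
  with i l obtain q' where q': "q = Suc q'"
    by (cases q) auto
  have "a = n - 1" and "2 \<le> n"
    using True l unfolding a q q' by (simp_all add: algebra_simps)
  moreover from this(1) n have "B * (l - 1) + G = 0"
    by linarith
  then have "B = 0" "G = 0"
    using l by auto
  ultimately show ?thesis
    using True by (simp add: block_partition_def mu_def)
next
  case False
  define i' where "i' = (if n mod l = 0 then i - 1 else i)"
  have "1 \<le> n"
    using i l div_le_dividend[of n l] by linarith
  then have "(n - 1) div l - i' = n div l - i"
    using pred_div_mod(1)[of n l] i l unfolding i'_def by auto
  then have "a = l - 1 + ((n - 1) div l - i') * l"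
    using a by simp
  moreover have "1 \<le> i'"
    using False i unfolding i'_def by auto
  ultimately show ?thesis
    using mu_eq_block_partition[OF _ _ n \<open>G < l - 1\<close>] unfolding i'_def by simp
qed

lemma etilde_mu_pos:
  assumes l: "2 \<le> l" and i: "1 \<le> i" "i \<le> n div l"
  shows "etilde l j (mu l n i) =
    (if j = (n - 1) mod l then Some (mu l (n - 1) (if n mod l = 0 then i - 1 else i)) else None)"
proof -
  define a where "a = l - 1 + (n div l - i) * l"
  define b where "b = (n - a) div (l - 1)"
  define c where "c = (n - a) mod (l - 1)"
  have "a < n"
  proof -
    have "a + 1 = (n div l - i + 1) * l"
      unfolding a_def using l by (simp add: algebra_simps)
    also have "\<dots> \<le> n div l * l"
      using i by (intro mult_le_mono1) linarith
    finally show ?thesis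
      using div_times_less_eq_dividend[of n l] by linarith
  qed
  then have n: "n = a + b * (l - 1) + c"
    using div_mult_mod_eq[of "n - a" "l - 1"] unfolding b_def c_def by linarith
  interpret mu_shape "l - 1" a b c l n
  proof
    show "a mod l = l - 1"
      unfolding a_def using l by (subst mod_mult_self1) simp
    show "1 \<le> b \<or> 0 < c"
      using n \<open>a < n\<close> l by (cases b) auto
    show "1 \<le> l - 1" and "l - 1 \<le> a" and "c < l - 1"
      using l unfolding a_def c_def by simp_all
  qed (use n in simp_all)
  have "mu l n i = p"
    by (rule mu_eq_block_partition[OF i(1) a_def n c_less_L])
  moreover have "(if 0 < c then block_partition (l - 1) a b (c - 1)
                  else block_partition (l - 1) a (b - 1) (l - 1 - 1))
      = mu l (n - 1) (if n mod l = 0 then i - 1 else i)"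
  proof (cases "0 < c")
    case True
    have "n - 1 = a + b * (l - 1) + (c - 1)"
      using n True by simp
    with True c_less_L show ?thesis
      using block_partition_eq_mu_pred[OF l i a_def] by simp
  next
    case False
    then obtain b' where b': "b = Suc b'"
      using tail_nonempty by (cases b) auto
    then have "n = a + b' * (l - 1) + (l - 1)"
      using n False by simp
    then have "n - 1 = a + (b - 1) * (l - 1) + (l - 1 - 1)"
      using l unfolding b' by simp
    with False l show ?thesis
      using block_partition_eq_mu_pred[OF l i a_def] by simp
  qed
  ultimately show ?thesis
    using etilde_p unfolding good_res_def by simp
qed

lemma etilde_Nil: "etilde l j [] = None"
proof -
  have "sig_word l j [] = filter (\<lambda>x. residue l (snd x) = int j) [(Add, (1, 1))]"
    by (simp add: sig_word_eq_filter_row_signatures is_partition_def row_signature_def rowlen_def)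
  then show ?thesis
    unfolding etilde_def by (simp add: good_box_eq_None_if_no_Rem)
qed

lemma etilde_single_row:
  assumes l: "2 \<le> l" and n: "1 \<le> n"
  shows "etilde l j [n] = (if j = (n - 1) mod l \<and> n mod l \<noteq> 0 then Some (mu l (n - 1) 0) else None)"
proof -
  have "residue l (2, 1) = int (l - 1)"
    using l by (intro residue_eq_of_nat[where m = 1]) auto
  moreover have "residue l (1, n + 1) = int (n mod l)"
    by (simp add: residue_def of_nat_mod)
  moreover have "residue l (1, n) = int ((n - 1) mod l)"
    using n by (simp add: residue_def of_nat_mod of_nat_diff)
  moreover have "is_partition [n]"
    using n by (simp add: is_partition_def)
  ultimately have word: "sig_word l j [n] =
      (if l - 1 = j then [(Add, (2, 1))] else [])
    @ (if n mod l = j then [(Add, (1, n + 1))] else [])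
    @ (if (n - 1) mod l = j then [(Rem, (1, n))] else [])"
    using n by (simp add: sig_word_eq_filter_row_signatures row_signature_def rowlen_def numeral_eq_Suc)
  have "good_box l j [n] = (if j = (n - 1) mod l \<and> n mod l \<noteq> 0 then Some (1, n) else None)"
  proof (cases "j = (n - 1) mod l")
    case True
    have "n mod l \<noteq> (n - 1) mod l \<and> ((n - 1) mod l = l - 1 \<longleftrightarrow> n mod l = 0)"
    proof (cases "n mod l = 0")
      case False
      have "n mod l < l"
        using l by simp
      moreover have "(n - 1) mod l = n mod l - 1"
        using False pred_div_mod(2)[OF n, of l] l by simp
      ultimately show ?thesis
        using False by (intro conjI iffI) linarith+
    qed (use l pred_div_mod(2)[OF n, of l] in simp)
    with True show ?thesis
      unfolding good_box_def word by (cases "n mod l = 0") (simp_all add: reduce_word_def del_step_def)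
  next
    case False
    then have "good_box l j [n] = None"
      by (intro good_box_eq_None_if_no_Rem) (auto simp: word)
    with False show ?thesis
      by simp
  qed
  moreover have "remove_box [n] (1, n) = mu l (n - 1) 0"
    by (simp add: remove_box_def mu_def)
  ultimately show ?thesis
    unfolding etilde_def by simp
qed

lemma etilde_pow_Suc: "etilde_pow l j (Suc k) la = Option.bind (etilde l j la) (etilde_pow l j k)"
proof -
  have "((\<lambda>x. Option.bind x f) ^^ k) None = None" for f :: "nat list \<Rightarrow> nat list option"
    by (induction k) auto
  then show ?thesis
    unfolding etilde_pow_def funpow_Suc_right by (cases "etilde l j la") auto
qed

lemma epsilon_eq_0:
  assumes "etilde l j la = None"
  shows "epsilon l j la = 0"
  unfolding epsilon_def
proof (rule Greatest_equality)
  show "etilde_pow l j 0 la \<noteq> None"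
    by (simp add: etilde_pow_def)
  show "k \<le> 0" if "etilde_pow l j k la \<noteq> None" for k
    using that assms by (cases k) (auto simp: etilde_pow_Suc)
qed

lemma epsilon_eq_1:
  assumes "etilde l j la = Some la'" and "etilde l j la' = None"
  shows "epsilon l j la = 1"
  unfolding epsilon_def
proof (rule Greatest_equality)
  show "etilde_pow l j 1 la \<noteq> None"
    using assms(1) by (simp add: etilde_pow_Suc etilde_pow_def)
  show "k \<le> 1" if "etilde_pow l j k la \<noteq> None" for k
    using that assms by (cases k; cases "k - 1") (auto simp: etilde_pow_Suc)
qed

lemma etilde_mu:
  assumes l: "2 \<le> l" and n: "1 \<le> n" and i: "i \<le> n div l"
  shows "etilde l j (mu l n i) =
    (if j = (n - 1) mod l \<and> (1 \<le> i \<or> n mod l \<noteq> 0)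
     then Some (mu l (n - 1) (if n mod l = 0 then i - 1 else i)) else None)"
proof (cases "i = 0")
  case True
  then have "mu l n i = [n]"
    using n by (simp add: mu_def)
  with True show ?thesis
    using etilde_single_row[OF l n] by simp
next
  case False
  then show ?thesis
    using etilde_mu_pos[OF l _ i] by simp
qed

lemma epsilon_mu:
  assumes l: "2 \<le> l" and n: "1 \<le> n" and i: "i \<le> n div l"
  shows "epsilon l j (mu l n i) = (if j = (n - 1) mod l \<and> (1 \<le> i \<or> n mod l \<noteq> 0) then 1 else 0)"
proof (cases "j = (n - 1) mod l \<and> (1 \<le> i \<or> n mod l \<noteq> 0)")
  case False
  then show ?thesis
    using etilde_mu[OF assms, of j] epsilon_eq_0 by simp
next
  case True
  define i' where "i' = (if n mod l = 0 then i - 1 else i)"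
  have "etilde l j (mu l (n - 1) i') = None"
  proof (cases "n = 1")
    case True
    then have "mu l (n - 1) i' = []"
      using i l by (simp add: mu_def i'_def)
    then show ?thesis
      by (simp add: etilde_Nil)
  next
    case False
    then have n': "1 \<le> n - 1"
      using n by simp
    have "i' \<le> (n - 1) div l"
      using pred_div_mod(1)[OF n] l i unfolding i'_def by auto
    moreover have "(n - 1 - 1) mod l \<noteq> (n - 1) mod l"
      using pred_div_mod(2)[OF n'] l by (cases "(n - 1) mod l = 0") auto
    ultimately show ?thesis
      using etilde_mu[OF l n', of i' j] True by simp
  qed
  with True show ?thesis
    using epsilon_eq_1 etilde_mu[OF assms, of j] unfolding i'_def by simp
qed

theorem lemma6p8:
  fixes l n :: nat
  assumes "l \<ge> 2" and "n \<ge> 1"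
  defines "N \<equiv> n div l"
  shows
   "(n mod l \<noteq> 0 \<longrightarrow>
       (\<forall>i\<le>N. \<forall>j<l. etilde l j (mu l n i) =
          (if j = (n - 1) mod l then Some (mu l (n - 1) i) else None)))
  \<and> (n mod l = 0 \<longrightarrow>
       (\<forall>i. 1 \<le> i \<and> i \<le> N \<longrightarrow> (\<forall>j<l. etilde l j (mu l n i) =
          (if j = (n - 1) mod l then Some (mu l (n - 1) (i - 1)) else None)))
     \<and> (\<forall>j<l. etilde l j (mu l n 0) = None))
  \<and> (\<forall>i. 1 \<le> i \<and> i \<le> N \<longrightarrow> (\<forall>j<l. epsilon l j (mu l n i) =
          (if j = (n - 1) mod l then 1 else 0)))
  \<and> (\<forall>j<l. epsilon l j (mu l n 0) =
          (if j = (n - 1) mod l \<and> n mod l \<noteq> 0 then 1 else 0))"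
  using etilde_mu[OF assms(1,2)] epsilon_mu[OF assms(1,2)] unfolding N_def by auto

end
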